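(* Fix $0<\theta<1$ and let $P_N(k)=W(N,k)/[N]_\theta!$ for $0\le k\le N-1$. Then: 1. For each fixed integer $j\ge1$, $\lim_{N\to\infty}P_N(N-j)=j\,\theta^{j-1}(1-\theta)$. 2. If $(k_N)$ is any sequence with $0\le k_N\le N-1$ and $N-k_N\to\infty$, then $P_N(k_N)\to0$. 3. The function $g(j)=j\,\theta^{j-1}(1-\theta)$ on real $j\ge1$ attains its maximum at $j^*=\max(-1/\ln\theta,\,1)$. When $1/e<\theta<1$, the maximum value is $g(j^* )=e^{-1}\,\dfrac{\theta-1}{\theta\ln\theta}$.
   Context: Permutations of $\{1,\dots,N\}$ are written in one-line notation; $\mathfrak S_N$ is the set of all of them. An entry $\pi_j$ is a left-to-right maximum if $\pi_j>\pi_i$ for all $i<j$; $\mathrm{inv}(\pi)$ is the number of pairs $i<j$ with $\pi_i>\pi_j$. Definitions: - $[m]_\theta=1+\theta+\cdots+\theta^{m-1}$ and $[m]_\theta!=[1]_\theta\cdots[m]_\theta$; note $[N]_\theta!=\sum_{\pi\in\mathfrak S_N}\theta^{\mathrm{inv}(\pi)}$. - For $0\le k\le N-1$, $\pi\in\mathfrak S_N$ is $k$-winnable if the first index $j>k$ with $\pi_j$ a left-to-right maximum has $\pi_j=N$. - $W(N,k)=\sum_{k\text{-winnable }\pi}\theta^{\mathrm{inv}(\pi)}$. Thus $P_N(k)$ is the probability of winning the best choice game under the Mallows distribution, in which $\pi\in\mathfrak S_N$ has probability $\theta^{\mathrm{inv}(\pi)}/[N]_\theta!$. The game is played with the positional strategy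 that rejects the first $k$ candidates and accepts the next left-to-right maximum; winning means the accepted candidate $i$ has $\pi_i=N$. *)

theory Defs
  imports "HOL-Analysis.Analysis" "HOL-Combinatorics.Multiset_Permutations"
begin

text \<open>Permutations of {1..N} in one-line notation are lists; list positions are 0-based,
  so the paper's position j (1-based) is list index j-1.\<close>

definition inversions :: "nat list \<Rightarrow> nat" where
  "inversions xs = card {(i, j). i < j \<and> j < length xs \<and> xs ! i > xs ! j}"

definition ltr_max :: "nat list \<Rightarrow> nat \<Rightarrow> bool" where
  "ltr_max xs j \<longleftrightarrow> j < length xs \<and> (\<forall>i<j. xs ! i < xs ! j)"

text \<open>k-winnable: the first (1-based) index j > k, i.e. 0-based index j >= k, at which a
  left-to-right maximum occurs exists and carries the value N.\<close>
definition winnable :: "nat \<Rightarrow> nat \<Rightarrow> nat list \<Rightarrow> bool" where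
  "winnable N k xs \<longleftrightarrow>
     (\<exists>j. k \<le> j \<and> ltr_max xs j \<and> xs ! j = N \<and>
          (\<forall>j'. k \<le> j' \<and> j' < j \<longrightarrow> \<not> ltr_max xs j'))"

definition W :: "real \<Rightarrow> nat \<Rightarrow> nat \<Rightarrow> real" where
  "W \<theta> N k = (\<Sum>xs\<in>{xs \<in> permutations_of_set {1..N}. winnable N k xs}. \<theta> ^ inversions xs)"

definition qint :: "real \<Rightarrow> nat \<Rightarrow> real" where
  "qint \<theta> m = (\<Sum>i<m. \<theta> ^ i)"

definition qfact :: "real \<Rightarrow> nat \<Rightarrow> real" where
  "qfact \<theta> N = (\<Prod>m=1..N. qint \<theta> m)"

definition P :: "real \<Rightarrow> nat \<Rightarrow> nat \<Rightarrow> real" where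
  "P \<theta> N k = W \<theta> N k / qfact \<theta> N"

end

theory Submission
  imports Defs
begin

text \<open>
  Call a left-to-right maximum a record. The strategy with threshold k wins on \<pi> iff
  exactly one record occurs at a position after k: the first one must be N, and
  nothing after N is a record. Appending an entry a to a permutation of the remaining
  values multiplies \<theta>^inv by \<theta>^#{earlier entries > a}, and creates a record iff
  a is the maximum. Summing over a yields a first-order recursion in N for the weights
  of "no record after k" and "exactly one record after k". Divided by [N]_\<theta>!, the
  corresponding probabilities are multiplied at each step by 1 - 1/[N]_\<theta> \<rightarrow> \<theta>, the
  second one being fed by the first times 1/[N]_\<theta> \<rightarrow> 1 - \<theta>. Running this
  recursion j steps past k gives j \<theta>^(j-1) (1 - \<theta>) in the limit, and the bound
  j \<theta>^(j-1) uniformly in k. The last claim is calculus: with c = -ln \<theta>, the function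
  x e^(-c(x-1)) peaks at x = 1/c, by e^y \<ge> 1 + y.
\<close>

section \<open>Appending an entry to a permutation\<close>

lemma sum_permutations_of_set_snoc:
  fixes h :: "'a list \<Rightarrow> 'b::comm_monoid_add"
  assumes "finite S" "S \<noteq> {}"
  shows "(\<Sum>xs\<in>permutations_of_set S. h xs) =
         (\<Sum>a\<in>S. \<Sum>ys\<in>permutations_of_set (S - {a}). h (ys @ [a]))"
proof -
  have last_in: "last ` permutations_of_set S \<subseteq> S"
  proof
    fix x assume "x \<in> last ` permutations_of_set S"
    then obtain xs where "set xs = S" "x = last xs" by (auto simp: permutations_of_set_def)
    then show "x \<in> S" by (metis assms(2) last_in_set set_empty)
  qed
  have ending_in: "{xs \<in> permutations_of_set S. last xs = a} =
                   (\<lambda>ys. ys @ [a]) ` permutations_of_set (S - {a})" if "a \<in> S" for a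
  proof (intro set_eqI iffI)
    fix xs assume "xs \<in> {xs \<in> permutations_of_set S. last xs = a}"
    then have xs: "set xs = S" "distinct xs" "last xs = a" "xs \<noteq> []"
      using assms(2) by (auto simp: permutations_of_set_def)
    then have "xs = butlast xs @ [a]" by (metis append_butlast_last_id)
    moreover have "butlast xs \<in> permutations_of_set (S - {a})"
      using xs by (subst (asm) (1 2) \<open>xs = butlast xs @ [a]\<close>)
        (auto simp: permutations_of_set_def)
    ultimately show "xs \<in> (\<lambda>ys. ys @ [a]) ` permutations_of_set (S - {a})" by blast
  next
    fix xs assume "xs \<in> (\<lambda>ys. ys @ [a]) ` permutations_of_set (S - {a})"
    then obtain ys where "set ys = S - {a}" "distinct ys" "xs = ys @ [a]"
      by (auto simp: permutations_of_set_def)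
    then have "set xs = S" "distinct xs" "last xs = a" using that by auto
    then show "xs \<in> {xs \<in> permutations_of_set S. last xs = a}"
      by (simp add: permutations_of_set_def)
  qed
  have "(\<Sum>xs\<in>permutations_of_set S. h xs) =
        (\<Sum>a\<in>S. \<Sum>xs\<in>{xs \<in> permutations_of_set S. last xs = a}. h xs)"
    using sum.group[OF finite_permutations_of_set assms(1) last_in, of h] by simp
  also have "\<dots> = (\<Sum>a\<in>S. \<Sum>ys\<in>permutations_of_set (S - {a}). h (ys @ [a]))"
    by (rule sum.cong[OF refl], subst ending_in) (auto simp: sum.reindex inj_on_def)
  finally show ?thesis .
qed

lemma inversions_snoc:
  assumes "distinct (ys @ [a])"
  shows "inversions (ys @ [a]) = inversions ys + card {s \<in> set ys. a < s}"
proof -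
  let ?n = "length ys"
  let ?old = "{(i, j). i < j \<and> j < ?n \<and> ys ! i > ys ! j}"
  let ?new = "{i. i < ?n \<and> a < ys ! i}"
  have split: "{(i, j). i < j \<and> j < length (ys @ [a]) \<and> (ys @ [a]) ! i > (ys @ [a]) ! j}
               = ?old \<union> (\<lambda>i. (i, ?n)) ` ?new"
    by (auto simp: nth_append less_Suc_eq)
  have "finite ?old"
    by (rule finite_subset[of _ "{..<?n} \<times> {..<?n}"]) auto
  moreover have "?old \<inter> (\<lambda>i. (i, ?n)) ` ?new = {}" by auto
  moreover have "card ((\<lambda>i. (i, ?n)) ` ?new) = card ?new"
    by (rule card_image) (auto simp: inj_on_def)
  moreover have "bij_betw ((!) ys) ?new {s \<in> set ys. a < s}"
    using assms by (auto simp: bij_betw_def inj_on_def nth_eq_iff_index_eq in_set_conv_nth)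
  ultimately show ?thesis
    unfolding inversions_def split by (simp add: card_Un_disjoint bij_betw_same_card)
qed

definition records_from :: "nat list \<Rightarrow> nat \<Rightarrow> nat" where
  "records_from xs k = card {j. k \<le> j \<and> ltr_max xs j}"

lemma finite_ltr_max: "finite {j. ltr_max xs j}"
  by (rule finite_subset[of _ "{..<length xs}"]) (auto simp: ltr_max_def)

lemma ltr_max_snoc_last_iff:
  assumes "distinct (ys @ [a])"
  shows "ltr_max (ys @ [a]) (length ys) \<longleftrightarrow> a = Max (insert a (set ys))"
proof -
  have "ltr_max (ys @ [a]) (length ys) \<longleftrightarrow> (\<forall>s\<in>set ys. s < a)"
    by (fastforce simp: ltr_max_def nth_append in_set_conv_nth)
  also have "\<dots> \<longleftrightarrow> a = Max (insert a (set ys))"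
    using assms by (auto intro!: Max_eqI[symmetric] simp: Max_ge_iff order.strict_iff_order)
      (metis Max_ge finite_insert finite_set insertCI)
  finally show ?thesis .
qed

lemma records_from_snoc:
  assumes "distinct (ys @ [a])"
  shows "records_from (ys @ [a]) k =
         records_from ys k + (if k \<le> length ys \<and> a = Max (insert a (set ys)) then 1 else 0)"
proof -
  have "{j. k \<le> j \<and> ltr_max (ys @ [a]) j} = {j. k \<le> j \<and> ltr_max ys j} \<union>
          (if k \<le> length ys \<and> a = Max (insert a (set ys)) then {length ys} else {})"
    using ltr_max_snoc_last_iff[OF assms]
    by (auto simp: ltr_max_def nth_append less_Suc_eq)
  moreover have "finite {j. k \<le> j \<and> ltr_max ys j}"
    using finite_ltr_max by (rule rev_finite_subset) auto
  ultimately show ?thesis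
    unfolding records_from_def by (simp add: ltr_max_def)
qed

lemma records_from_eq_0: "length xs \<le> k \<Longrightarrow> records_from xs k = 0"
  unfolding records_from_def ltr_max_def by auto

lemma winnable_iff_records_from_eq_1:
  assumes xs: "xs \<in> permutations_of_set {1..N}"
  shows "winnable N k xs \<longleftrightarrow> records_from xs k = 1"
proof -
  have set_xs: "set xs = {1..N}" and "distinct xs"
    using xs by (auto simp: permutations_of_set_def)
  have le_N: "xs ! i \<le> N" if "i < length xs" for i
    using that set_xs nth_mem by fastforce
  have nothing_after_N: "\<not> ltr_max xs j'" if "xs ! j = N" "j < j'" for j j'
    using that le_N by (fastforce simp: ltr_max_def)
  show ?thesis
  proof
    assume "winnable N k xs"
    then obtain j where j: "k \<le> j" "ltr_max xs j" "xs ! j = N"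
      and first: "\<And>j'. k \<le> j' \<Longrightarrow> j' < j \<Longrightarrow> \<not> ltr_max xs j'"
      unfolding winnable_def by blast
    have "j' = j" if "k \<le> j'" "ltr_max xs j'" for j'
      using that first[of j'] nothing_after_N[OF j(3), of j'] by (metis linorder_neqE_nat)
    then have "{j. k \<le> j \<and> ltr_max xs j} = {j}"
      using j by blast
    then show "records_from xs k = 1" unfolding records_from_def by simp
  next
    assume "records_from xs k = 1"
    then obtain j where "{j. k \<le> j \<and> ltr_max xs j} = {j}"
      unfolding records_from_def using card_1_singletonE by blast
    then have j: "k \<le> j" "ltr_max xs j"
      and unique: "\<And>j'. k \<le> j' \<Longrightarrow> ltr_max xs j' \<Longrightarrow> j' = j"
      by blast+
    from j(2) have "xs \<noteq> []" by (auto simp: ltr_max_def)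
    then have "N \<in> set xs" using set_xs by (cases "N = 0") auto
    then obtain p where p: "p < length xs" "xs ! p = N" by (auto simp: in_set_conv_nth)
    have "ltr_max xs p"
      using p le_N nth_eq_iff_index_eq[OF \<open>distinct xs\<close>]
      by (fastforce simp: ltr_max_def order.strict_iff_order)
    then have "p = j"
      using j nothing_after_N[OF p(2), of j] by (cases "k \<le> p") (auto intro: unique)
    then show "winnable N k xs"
      unfolding winnable_def using j p unique by (intro exI[of _ j]) fastforce
  qed
qed

section \<open>Weighted counts of permutations by number of late records\<close>

lemma qint_Suc: "qint \<theta> (Suc n) = 1 + \<theta> * qint \<theta> n"
  unfolding qint_def sum.lessThan_Suc_shift by (simp add: sum_distrib_left)

lemma qfact_Suc: "qfact \<theta> (Suc n) = qint \<theta> (Suc n) * qfact \<theta> n"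
  unfolding qfact_def by (simp add: prod.cl_ivl_Suc)

lemma qint_Suc_ge_1:
  assumes "0 \<le> \<theta>"
  shows "1 \<le> qint \<theta> (Suc m)"
proof -
  have "0 \<le> qint \<theta> m" unfolding qint_def using assms by (simp add: sum_nonneg)
  then show ?thesis using assms by (simp add: qint_Suc)
qed

lemma qfact_pos: "0 \<le> \<theta> \<Longrightarrow> 0 < qfact \<theta> n"
proof (induction n)
  case 0
  then show ?case by (simp add: qfact_def)
next
  case (Suc n)
  then show ?case using qint_Suc_ge_1[of \<theta> n] by (simp add: qfact_Suc)
qed

definition num_greater :: "nat set \<Rightarrow> nat \<Rightarrow> nat" where
  "num_greater S a = card {s \<in> S. a < s}"

lemma num_greater_Max: "finite S \<Longrightarrow> num_greater S (Max S) = 0"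
  unfolding num_greater_def by (simp add: card_eq_0_iff) (meson Max_ge not_le)

lemma sum_power_num_greater:
  "finite S \<Longrightarrow> (\<Sum>a\<in>S. \<theta> ^ num_greater S a) = qint \<theta> (card S)"
proof (induction "card S" arbitrary: S)
  case 0
  then show ?case by (simp add: qint_def)
next
  case (Suc n)
  have card: "card S = Suc n" using Suc.hyps(2) by simp
  define M where "M = Max S"
  have M: "M \<in> S" using Suc.prems card M_def by (metis Max_in card.empty nat.distinct(1))
  have "num_greater S a = Suc (num_greater (S - {M}) a)" if "a \<in> S - {M}" for a
  proof -
    have "a < M" using that Suc.prems unfolding M_def by (simp add: order.not_eq_order_implies_strict)
    then have "{s \<in> S. a < s} = insert M {s \<in> S - {M}. a < s}" using M by auto
    then show ?thesis unfolding num_greater_def using Suc.prems by simp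
  qed
  then have "(\<Sum>a\<in>S - {M}. \<theta> ^ num_greater S a) = \<theta> * (\<Sum>a\<in>S - {M}. \<theta> ^ num_greater (S - {M}) a)"
    by (simp add: sum_distrib_left)
  also have "\<dots> = \<theta> * qint \<theta> n"
    using Suc.hyps(1)[of "S - {M}"] Suc.prems card M by simp
  finally show ?case
    using sum.remove[OF Suc.prems M, of "\<lambda>a. \<theta> ^ num_greater S a"] card
      num_greater_Max[OF Suc.prems]
    by (simp add: qint_Suc M_def)
qed

lemma sum_power_num_greater_Max_split:
  assumes "finite S" "S \<noteq> {}"
  shows "(\<Sum>a\<in>S. \<theta> ^ num_greater S a * (if a = Max S then X else Y)) =
         X + (qint \<theta> (card S) - 1) * Y"
proof -
  have M: "Max S \<in> S" using assms by simp
  have "(\<Sum>a\<in>S. \<theta> ^ num_greater S a * (if a = Max S then X else Y)) =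
        X + (\<Sum>a\<in>S - {Max S}. \<theta> ^ num_greater S a) * Y"
    by (simp add: sum.remove[OF assms(1) M] num_greater_Max[OF assms(1)] sum_distrib_right)
  also have "(\<Sum>a\<in>S - {Max S}. \<theta> ^ num_greater S a) = qint \<theta> (card S) - 1"
    using sum.remove[OF assms(1) M, of "\<lambda>a. \<theta> ^ num_greater S a"]
    by (simp add: sum_power_num_greater[OF assms(1)] num_greater_Max[OF assms(1)])
  finally show ?thesis .
qed

text \<open>A predicate \<Phi> on the number of records rather than a fixed number, so that the
  record created by the last entry is absorbed by shifting \<Phi>.\<close>

definition records_weight :: "real \<Rightarrow> nat \<Rightarrow> (nat \<Rightarrow> bool) \<Rightarrow> nat set \<Rightarrow> real" where
  "records_weight \<theta> k \<Phi> S =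
     (\<Sum>xs\<in>permutations_of_set S. if \<Phi> (records_from xs k) then \<theta> ^ inversions xs else 0)"

lemma records_weight_remove_last:
  assumes "finite S" "card S = Suc n"
  shows "records_weight \<theta> k \<Phi> S =
         (\<Sum>a\<in>S. \<theta> ^ num_greater S a *
            records_weight \<theta> k (\<lambda>l. \<Phi> (l + (if k \<le> n \<and> a = Max S then 1 else 0))) (S - {a}))"
proof -
  have snoc: "(if \<Phi> (records_from (ys @ [a]) k) then \<theta> ^ inversions (ys @ [a]) else 0) =
        \<theta> ^ num_greater S a * (if \<Phi> (records_from ys k + (if k \<le> n \<and> a = Max S then 1 else 0))
                                then \<theta> ^ inversions ys else 0)"
    if a: "a \<in> S" and ys: "ys \<in> permutations_of_set (S - {a})" for a ys
  proof -
    have "set ys = S - {a}" "distinct ys" using ys by (auto simp: permutations_of_set_def)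
    moreover have "length ys = n"
      using ys a assms by (simp add: length_finite_permutations_of_set)
    ultimately have "distinct (ys @ [a])" "insert a (set ys) = S"
      "{s \<in> set ys. a < s} = {s \<in> S. a < s}" "length ys = n"
      using a by auto
    then show ?thesis
      by (simp add: records_from_snoc inversions_snoc num_greater_def power_add)
  qed
  have "S \<noteq> {}" using assms(2) by auto
  then show ?thesis
    unfolding records_weight_def sum_permutations_of_set_snoc[OF assms(1) \<open>S \<noteq> {}\<close>] sum_distrib_left
    by (intro sum.cong refl) (rule snoc)
qed

lemma records_weight_short:
  assumes "card S \<le> k"
  shows "records_weight \<theta> k \<Phi> S = (if \<Phi> 0 then records_weight \<theta> k (\<lambda>_. True) S else 0)"
proof -
  have "records_from xs k = 0" if "xs \<in> permutations_of_set S" for xs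
    using that assms by (intro records_from_eq_0) (simp add: length_finite_permutations_of_set)
  then show ?thesis unfolding records_weight_def by (auto intro!: sum.cong)
qed

lemma records_weight_False: "records_weight \<theta> k (\<lambda>_. False) S = 0"
  unfolding records_weight_def by simp

lemma records_weight_True: "finite S \<Longrightarrow> records_weight \<theta> k (\<lambda>_. True) S = qfact \<theta> (card S)"
proof (induction "card S" arbitrary: S)
  case 0
  then show ?case by (simp add: records_weight_def qfact_def inversions_def)
next
  case (Suc n)
  have card: "card S = Suc n" using Suc.hyps(2) by simp
  have "records_weight \<theta> k (\<lambda>_. True) S =
        (\<Sum>a\<in>S. \<theta> ^ num_greater S a * records_weight \<theta> k (\<lambda>_. True) (S - {a}))"
    using records_weight_remove_last[OF Suc.prems card] by simp
  also have "\<dots> = (\<Sum>a\<in>S. \<theta> ^ num_greater S a) * qfact \<theta> n"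
    unfolding sum_distrib_right using Suc.hyps(1) Suc.prems card by (intro sum.cong) auto
  finally show ?case
    using Suc.prems card by (simp add: sum_power_num_greater qfact_Suc)
qed

fun no_record_weight :: "real \<Rightarrow> nat \<Rightarrow> nat \<Rightarrow> real" where
  "no_record_weight \<theta> k 0 = 1"
| "no_record_weight \<theta> k (Suc n) =
     (if Suc n \<le> k then qfact \<theta> (Suc n) else (qint \<theta> (Suc n) - 1) * no_record_weight \<theta> k n)"

fun one_record_weight :: "real \<Rightarrow> nat \<Rightarrow> nat \<Rightarrow> real" where
  "one_record_weight \<theta> k 0 = 0"
| "one_record_weight \<theta> k (Suc n) =
     (if Suc n \<le> k then 0
      else (qint \<theta> (Suc n) - 1) * one_record_weight \<theta> k n + no_record_weight \<theta> k n)"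

lemma records_weight_eq_0:
  "finite S \<Longrightarrow> records_weight \<theta> k (\<lambda>l. l = 0) S = no_record_weight \<theta> k (card S)"
proof (induction "card S" arbitrary: S)
  case 0
  then show ?case by (simp add: records_weight_def records_from_def ltr_max_def inversions_def)
next
  case (Suc n)
  have card: "card S = Suc n" using Suc.hyps(2) by simp
  then have ne: "S \<noteq> {}" by auto
  have IH: "records_weight \<theta> k (\<lambda>l. l = 0) (S - {a}) = no_record_weight \<theta> k n" if "a \<in> S" for a
    using Suc.hyps(1)[of "S - {a}"] Suc.prems card that by simp
  show ?case
  proof (cases "Suc n \<le> k")
    case True
    then show ?thesis
      using records_weight_short[of S k] records_weight_True[OF Suc.prems] card by simp
  next
    case False
    have "records_weight \<theta> k (\<lambda>l. l = 0) S =
          (\<Sum>a\<in>S. \<theta> ^ num_greater S a * (if a = Max S then 0 else no_record_weight \<theta> k n))"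
      unfolding records_weight_remove_last[OF Suc.prems card]
      using False IH by (intro sum.cong refl) (simp add: records_weight_False)
    then show ?thesis
      using False card by (simp add: sum_power_num_greater_Max_split[OF Suc.prems ne])
  qed
qed

lemma records_weight_eq_1:
  "finite S \<Longrightarrow> records_weight \<theta> k (\<lambda>l. l = 1) S = one_record_weight \<theta> k (card S)"
proof (induction "card S" arbitrary: S)
  case 0
  then show ?case by (simp add: records_weight_def records_from_def ltr_max_def)
next
  case (Suc n)
  have card: "card S = Suc n" using Suc.hyps(2) by simp
  then have ne: "S \<noteq> {}" by auto
  have IH: "records_weight \<theta> k (\<lambda>l. l = 1) (S - {a}) = one_record_weight \<theta> k n" if "a \<in> S" for a
    using Suc.hyps(1)[of "S - {a}"] Suc.prems card that by simp
  have IH0: "records_weight \<theta> k (\<lambda>l. l = 0) (S - {a}) = no_record_weight \<theta> k n" if "a \<in> S" for a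
    using records_weight_eq_0[of "S - {a}"] Suc.prems card that by simp
  show ?case
  proof (cases "Suc n \<le> k")
    case True
    then show ?thesis using records_weight_short[of S k] card by simp
  next
    case False
    have "records_weight \<theta> k (\<lambda>l. l = 1) S =
          (\<Sum>a\<in>S. \<theta> ^ num_greater S a *
             (if a = Max S then no_record_weight \<theta> k n else one_record_weight \<theta> k n))"
      unfolding records_weight_remove_last[OF Suc.prems card]
      using False IH IH0 Max_in[OF Suc.prems ne] by (intro sum.cong refl) simp
    then show ?thesis
      using False card by (simp add: sum_power_num_greater_Max_split[OF Suc.prems ne])
  qed
qed

lemma P_eq_one_record_weight: "P \<theta> N k = one_record_weight \<theta> k N / qfact \<theta> N"
proof -
  have "W \<theta> N k = (\<Sum>xs\<in>permutations_of_set {1..N}.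
                    if winnable N k xs then \<theta> ^ inversions xs else 0)"
    unfolding W_def by (rule sum.inter_filter) simp
  also have "\<dots> = records_weight \<theta> k (\<lambda>l. l = 1) {1..N}"
    unfolding records_weight_def
    by (rule sum.cong) (simp_all add: winnable_iff_records_from_eq_1)
  finally show ?thesis
    unfolding P_def using records_weight_eq_1[of "{1..N}" \<theta> k] by simp
qed

section \<open>Asymptotics of the winning probability\<close>

definition P_no_record :: "real \<Rightarrow> nat \<Rightarrow> nat \<Rightarrow> real" where
  "P_no_record \<theta> N k = no_record_weight \<theta> k N / qfact \<theta> N"

lemma P_no_record_Suc:
  "0 \<le> \<theta> \<Longrightarrow> k \<le> n \<Longrightarrow>
   P_no_record \<theta> (Suc n) k = (1 - 1 / qint \<theta> (Suc n)) * P_no_record \<theta> n k"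
  using qfact_pos[of \<theta> n] qint_Suc_ge_1[of \<theta> n]
  unfolding P_no_record_def by (simp add: qfact_Suc field_simps)

lemma P_Suc:
  "0 \<le> \<theta> \<Longrightarrow> k \<le> n \<Longrightarrow>
   P \<theta> (Suc n) k = (1 - 1 / qint \<theta> (Suc n)) * P \<theta> n k + P_no_record \<theta> n k / qint \<theta> (Suc n)"
  using qfact_pos[of \<theta> n] qint_Suc_ge_1[of \<theta> n]
  unfolding P_eq_one_record_weight P_no_record_def by (simp add: qfact_Suc field_simps)

lemma P_no_record_self:
  assumes "0 \<le> \<theta>"
  shows "P_no_record \<theta> k k = 1"
proof -
  have "no_record_weight \<theta> k k = qfact \<theta> k" by (cases k) (simp_all add: qfact_def)
  then show ?thesis using qfact_pos[OF assms, of k] by (simp add: P_no_record_def)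
qed

lemma P_self: "P \<theta> k k = 0"
  unfolding P_eq_one_record_weight by (cases k) simp_all

text \<open>The factor 1 - 1/[n+1]_\<theta> = \<theta> [n]_\<theta>/[n+1]_\<theta> lies in [0, \<theta>].\<close>

lemma one_minus_inverse_qint_bounds:
  assumes "0 \<le> \<theta>"
  shows "0 \<le> 1 - 1 / qint \<theta> (Suc n)" "1 - 1 / qint \<theta> (Suc n) \<le> \<theta>"
proof -
  have q: "1 \<le> qint \<theta> (Suc n)" using qint_Suc_ge_1[OF assms] .
  then show "0 \<le> 1 - 1 / qint \<theta> (Suc n)" by simp
  have "qint \<theta> n \<le> qint \<theta> (Suc n)" unfolding qint_def using assms by simp
  then have "\<theta> * qint \<theta> n \<le> \<theta> * qint \<theta> (Suc n)" using assms by (rule mult_left_mono)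
  then show "1 - 1 / qint \<theta> (Suc n) \<le> \<theta>"
    using q by (simp add: field_simps qint_Suc)
qed

lemma P_no_record_bounds:
  assumes "0 \<le> \<theta>"
  shows "0 \<le> P_no_record \<theta> (k + i) k \<and> P_no_record \<theta> (k + i) k \<le> \<theta> ^ i"
proof (induction i)
  case 0
  then show ?case using assms by (simp add: P_no_record_self)
next
  case (Suc i)
  then show ?case
    using P_no_record_Suc[OF assms, of k "k + i"] one_minus_inverse_qint_bounds[OF assms, of "k + i"]
    by (auto intro: mult_mono)
qed

lemma P_bounds:
  assumes "0 < \<theta>"
  shows "0 \<le> P \<theta> (k + i) k \<and> P \<theta> (k + i) k \<le> real i * \<theta> ^ i / \<theta>"
proof (induction i)
  case 0
  then show ?case by (simp add: P_self)
next
  case (Suc i)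
  let ?t = "1 - 1 / qint \<theta> (Suc (k + i))" and ?u = "1 / qint \<theta> (Suc (k + i))"
  have t: "0 \<le> ?t" "?t \<le> \<theta>" and u: "0 \<le> ?u" "?u \<le> 1"
    using one_minus_inverse_qint_bounds[of \<theta> "k + i"] qint_Suc_ge_1[of \<theta> "k + i"] assms by auto
  have a: "0 \<le> P_no_record \<theta> (k + i) k" "P_no_record \<theta> (k + i) k \<le> \<theta> ^ i"
    using P_no_record_bounds[of \<theta> k i] assms by auto
  have "?t * P \<theta> (k + i) k \<le> \<theta> * (real i * \<theta> ^ i / \<theta>)"
    using Suc.IH t by (intro mult_mono) auto
  moreover have "P_no_record \<theta> (k + i) k * ?u \<le> \<theta> ^ i * 1"
    using a u by (intro mult_mono) auto
  moreover have "\<theta> * (real i * \<theta> ^ i / \<theta>) + \<theta> ^ i * 1 = real (Suc i) * \<theta> ^ Suc i / \<theta>"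
    using assms by (simp add: field_simps)
  ultimately show ?case
    using P_Suc[of \<theta> k "k + i"] Suc.IH t u a assms by (auto simp: divide_inverse)
qed

lemma inverse_qint_tendsto:
  assumes "0 < \<theta>" "\<theta> < 1"
  shows "(\<lambda>k. 1 / qint \<theta> (k + i)) \<longlonglongrightarrow> 1 - \<theta>"
proof -
  have "(\<lambda>k. \<theta> ^ (k + i)) \<longlonglongrightarrow> 0"
    using LIMSEQ_power_zero[of \<theta>] assms by (intro LIMSEQ_ignore_initial_segment) auto
  then have "(\<lambda>k. (1 - \<theta>) / (1 - \<theta> ^ (k + i))) \<longlonglongrightarrow> (1 - \<theta>) / (1 - 0)"
    by (intro tendsto_intros) auto
  then show ?thesis using assms by (simp add: qint_def sum_gp_strict)
qed

lemma P_limits: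
  assumes "0 < \<theta>" "\<theta> < 1"
  shows "(\<lambda>k. P_no_record \<theta> (k + i) k) \<longlonglongrightarrow> \<theta> ^ i \<and>
         (\<lambda>k. P \<theta> (k + i) k) \<longlonglongrightarrow> real i * \<theta> ^ i / \<theta> * (1 - \<theta>)"
proof (induction i)
  case 0
  then show ?case using assms by (simp add: P_no_record_self P_self)
next
  case (Suc i)
  have u: "(\<lambda>k. 1 / qint \<theta> (k + Suc i)) \<longlonglongrightarrow> 1 - \<theta>"
    using inverse_qint_tendsto[OF assms] .
  then have t: "(\<lambda>k. 1 - 1 / qint \<theta> (k + Suc i)) \<longlonglongrightarrow> \<theta>"
    using tendsto_diff[OF tendsto_const[of 1]] by fastforce
  have "(\<lambda>k. (1 - 1 / qint \<theta> (k + Suc i)) * P_no_record \<theta> (k + i) k) \<longlonglongrightarrow> \<theta> * \<theta> ^ i"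
    using Suc.IH by (intro tendsto_mult t) auto
  moreover have "(\<lambda>k. (1 - 1 / qint \<theta> (k + Suc i)) * P \<theta> (k + i) k +
                      P_no_record \<theta> (k + i) k * (1 / qint \<theta> (k + Suc i)))
       \<longlonglongrightarrow> \<theta> * (real i * \<theta> ^ i / \<theta> * (1 - \<theta>)) + \<theta> ^ i * (1 - \<theta>)"
    using Suc.IH by (intro tendsto_add tendsto_mult t u) auto
  moreover have "\<theta> * (real i * \<theta> ^ i / \<theta> * (1 - \<theta>)) + \<theta> ^ i * (1 - \<theta>) =
                 real (Suc i) * \<theta> ^ Suc i / \<theta> * (1 - \<theta>)"
    using assms by (simp add: field_simps)
  ultimately show ?case
    using assms by (simp add: P_no_record_Suc P_Suc divide_inverse)
qed

lemma P_last_tendsto: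
  assumes "0 < \<theta>" "\<theta> < 1" "1 \<le> j"
  shows "(\<lambda>N. P \<theta> N (N - j)) \<longlonglongrightarrow> real j * \<theta> ^ (j - 1) * (1 - \<theta>)"
proof (rule LIMSEQ_offset[of _ j])
  have "real j * \<theta> ^ j / \<theta> * (1 - \<theta>) = real j * \<theta> ^ (j - 1) * (1 - \<theta>)"
    using assms by (cases j) (simp_all add: field_simps)
  then show "(\<lambda>n. P \<theta> (n + j) (n + j - j)) \<longlonglongrightarrow> real j * \<theta> ^ (j - 1) * (1 - \<theta>)"
    using P_limits[OF assms(1,2), of j] by simp
qed

lemma P_tendsto_0:
  assumes "0 < \<theta>" "\<theta> < 1"
    and k: "\<forall>\<^sub>F N in sequentially. k N \<le> N"
    and gap: "filterlim (\<lambda>N. N - k N) at_top sequentially"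
  shows "(\<lambda>N. P \<theta> N (k N)) \<longlonglongrightarrow> 0"
proof (rule tendsto_sandwich[of "\<lambda>_. 0" _ _ "\<lambda>N. real (N - k N) * \<theta> ^ (N - k N) / \<theta>"])
  have "0 \<le> P \<theta> N (k N) \<and> P \<theta> N (k N) \<le> real (N - k N) * \<theta> ^ (N - k N) / \<theta>"
    if "k N \<le> N" for N
    using P_bounds[OF assms(1), of "k N" "N - k N"] that by simp
  then show "\<forall>\<^sub>F N in sequentially. 0 \<le> P \<theta> N (k N)"
    and "\<forall>\<^sub>F N in sequentially. P \<theta> N (k N) \<le> real (N - k N) * \<theta> ^ (N - k N) / \<theta>"
    using k by (auto elim: eventually_mono)
  have "(\<lambda>m. real m * \<theta> ^ m / \<theta>) \<longlonglongrightarrow> 0 / \<theta>"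
    using powser_times_n_limit_0[of \<theta>] assms by (intro tendsto_divide) auto
  then show "(\<lambda>N. real (N - k N) * \<theta> ^ (N - k N) / \<theta>) \<longlonglongrightarrow> 0"
    using filterlim_compose[OF _ gap] by fastforce
qed auto

section \<open>The optimal limiting threshold\<close>

lemma mult_exp_le_at_max:
  fixes c x :: real
  assumes "0 < c" "1 \<le> x"
  defines "m \<equiv> max (1 / c) 1"
  shows "x * exp (- c * (x - 1)) \<le> m * exp (- c * (m - 1))"
proof (cases "1 \<le> 1 / c")
  case True
  have "c * (x * exp (- c * (x - 1))) = c * x * exp (c - c * x)"
    by (simp add: algebra_simps)
  also have "\<dots> \<le> exp (c * x - 1) * exp (c - c * x)"
    using exp_ge_add_one_self[of "c * x - 1"] by (intro mult_right_mono) auto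
  also have "\<dots> = c * (1 / c * exp (- c * (1 / c - 1)))"
    using assms(1) by (simp flip: exp_add add: algebra_simps)
  finally have "x * exp (- c * (x - 1)) \<le> 1 / c * exp (- c * (1 / c - 1))"
    by (rule mult_left_le_imp_le) (rule assms(1))
  then show ?thesis using True by (simp add: m_def)
next
  case False
  then have "1 < c" using assms(1) by (simp add: field_simps)
  then have "0 \<le> (c - 1) * (x - 1)" using assms(2) by simp
  then have "x \<le> 1 + c * (x - 1)" by (simp add: algebra_simps)
  also have "\<dots> \<le> exp (c * (x - 1))" by (rule exp_ge_add_one_self)
  finally have "x * exp (- c * (x - 1)) \<le> exp (c * (x - 1)) * exp (- c * (x - 1))"
    by (intro mult_right_mono) auto
  then show ?thesis using False by (simp add: m_def flip: exp_add)
qed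

lemma limit_probability_maximum:
  assumes "0 < \<theta>" "\<theta> < 1"
  shows "let g = (\<lambda>x::real. x * \<theta> powr (x - 1) * (1 - \<theta>));
             js = max (- 1 / ln \<theta>) 1
         in (\<forall>x\<ge>1. g x \<le> g js) \<and>
            (1 / exp 1 < \<theta> \<longrightarrow> g js = exp (- 1) * ((\<theta> - 1) / (\<theta> * ln \<theta>)))"
proof -
  define c where "c = - ln \<theta>"
  define g where "g = (\<lambda>x::real. x * \<theta> powr (x - 1) * (1 - \<theta>))"
  have c: "0 < c" using assms by (simp add: c_def)
  have g_eq: "g x = x * exp (- c * (x - 1)) * (1 - \<theta>)" for x
    using assms by (simp add: g_def c_def powr_def mult.commute)
  have js: "max (- 1 / ln \<theta>) 1 = max (1 / c) 1" by (simp add: c_def)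
  have at_max: "g x \<le> g (max (1 / c) 1)" if "1 \<le> x" for x
    unfolding g_eq using mult_exp_le_at_max[OF c that] assms by (intro mult_right_mono) auto
  have maximum_value: "g (max (1 / c) 1) = exp (- 1) * ((\<theta> - 1) / (\<theta> * ln \<theta>))"
    if "1 / exp 1 < \<theta>"
  proof -
    have "c < 1"
      using that assms ln_less_cancel_iff[of "1 / exp 1" \<theta>] by (simp add: c_def ln_div)
    then have "max (1 / c) 1 = 1 / c" using c by simp
    then have "g (max (1 / c) 1) = 1 / c * exp (- c * (1 / c - 1)) * (1 - \<theta>)"
      by (simp add: g_eq)
    also have "- c * (1 / c - 1) = - 1 + c" using c by (simp add: field_simps)
    also have "exp (- 1 + c) = exp (- 1) / \<theta>"
      using assms by (simp add: c_def exp_diff)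
    also have "1 / c * (exp (- 1) / \<theta>) * (1 - \<theta>) = exp (- 1) * ((\<theta> - 1) / (\<theta> * ln \<theta>))"
      using assms by (simp add: c_def field_simps)
    finally show ?thesis .
  qed
  show ?thesis unfolding Let_def js using at_max maximum_value by (simp add: g_def)
qed

theorem theorem6p5:
  fixes \<theta> :: real
  assumes "0 < \<theta>" and "\<theta> < 1"
  shows "(\<forall>j::nat. j \<ge> 1 \<longrightarrow>
            (\<lambda>N. P \<theta> N (N - j)) \<longlonglongrightarrow> real j * \<theta> ^ (j - 1) * (1 - \<theta>))
     \<and> (\<forall>k :: nat \<Rightarrow> nat. (\<forall>N. N \<ge> 1 \<longrightarrow> k N \<le> N - 1) \<longrightarrow>
            filterlim (\<lambda>N. N - k N) at_top sequentially \<longrightarrow>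
            (\<lambda>N. P \<theta> N (k N)) \<longlonglongrightarrow> 0)
     \<and> (let g = (\<lambda>x::real. x * \<theta> powr (x - 1) * (1 - \<theta>));
             js = max (- 1 / ln \<theta>) 1
         in (\<forall>x\<ge>1. g x \<le> g js) \<and>
            (1 / exp 1 < \<theta> \<longrightarrow> g js = exp (- 1) * ((\<theta> - 1) / (\<theta> * ln \<theta>))))"
proof (intro conjI allI impI)
  show "(\<lambda>N. P \<theta> N (N - j)) \<longlonglongrightarrow> real j * \<theta> ^ (j - 1) * (1 - \<theta>)" if "j \<ge> 1" for j
    using P_last_tendsto[OF assms that] .
  fix k :: "nat \<Rightarrow> nat"
  assume k: "\<forall>N. N \<ge> 1 \<longrightarrow> k N \<le> N - 1"
    and gap: "filterlim (\<lambda>N. N - k N) at_top sequentially"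
  have "\<forall>\<^sub>F N in sequentially. k N \<le> N"
    using eventually_ge_at_top[of "1::nat"] by eventually_elim (use k in auto)
  then show "(\<lambda>N. P \<theta> N (k N)) \<longlonglongrightarrow> 0"
    using P_tendsto_0[OF assms _ gap] by blast
qed (use limit_probability_maximum[OF assms] in \<open>simp_all add: Let_def\<close>)

end
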